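(* Let $g_1=(y^2+x)\,dx\,dy$, $g_2=-2\frac{y^2+x}{y^3}dx\,dy+\frac{(y^2+x)^2}{y^4}dy^2$, $g_3=\frac{y^2+x}{(3x-y^2)^6}\big(9(y^2+x)dx^2-4y(9x+y^2)dx\,dy+12x(y^2+x)dy^2\big)$. Let $(u,v)\mapsto(x(u,v),y(u,v))$ be a local diffeomorphism such that for each $i\in\{1,2,3\}$ the pullback of $g_i$ (written in $(x,y)$) equals $\mu_i\,g_i$ written in the coordinates $(u,v)$, for some constants $\mu_i\ne0$. Then there is $k\in\mathbb R\setminus\{0\}$ with $x=k^2u$ and $y=kv$.
   Context: $dx\,dy$ denotes the symmetric product. The metrics $g_1,g_2,g_3$ are projectively equivalent and their Liouville tensors are eigenvectors of the Lie derivative along the projective vector field $w=2x\partial_x+y\partial_y$, with $\mathcal L_wg_1=5g_1$, $\mathcal L_wg_2=2g_2$, $\mathcal L_wg_3=-4g_3$. *)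

theory Defs
  imports "HOL-Analysis.Analysis"
begin

text \<open>A quadratic differential (symmetric 2-tensor) E dx^2 + F dx dy + G dy^2 on the plane
  is represented by the quadratic form (p, (a,b)) \<mapsto> E(p) a^2 + F(p) a b + G(p) b^2,
  where dx dy is the symmetric product (so dx dy (v,v) = dx(v) dy(v)).\<close>

definition g1 :: "real \<times> real \<Rightarrow> real \<times> real \<Rightarrow> real" where
  "g1 p v = (case p of (x, y) \<Rightarrow> case v of (a, b) \<Rightarrow> (y^2 + x) * a * b)"

definition g2 :: "real \<times> real \<Rightarrow> real \<times> real \<Rightarrow> real" where
  "g2 p v = (case p of (x, y) \<Rightarrow> case v of (a, b) \<Rightarrow>
      - 2 * (y^2 + x) / y^3 * a * b + (y^2 + x)^2 / y^4 * b^2)"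

definition g3 :: "real \<times> real \<Rightarrow> real \<times> real \<Rightarrow> real" where
  "g3 p v = (case p of (x, y) \<Rightarrow> case v of (a, b) \<Rightarrow>
      (y^2 + x) / (3 * x - y^2)^6 *
        (9 * (y^2 + x) * a^2 - 4 * y * (9 * x + y^2) * a * b + 12 * x * (y^2 + x) * b^2))"

definition metric_domain :: "(real \<times> real) set" where
  "metric_domain = {(x, y). y \<noteq> 0 \<and> 3 * x \<noteq> y^2}"

definition pulls_back_to_multiple ::
  "(real \<times> real \<Rightarrow> real \<times> real \<Rightarrow> real) \<Rightarrow> (real \<times> real \<Rightarrow> real \<times> real)
   \<Rightarrow> (real \<times> real \<Rightarrow> (real \<times> real) \<Rightarrow>\<^sub>L (real \<times> real)) \<Rightarrow> (real \<times> real) set \<Rightarrow> real \<Rightarrow> bool" where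
  "pulls_back_to_multiple g \<phi> D U \<mu> \<longleftrightarrow>
     (\<forall>p\<in>U. \<forall>v. g (\<phi> p) (blinfun_apply (D p) v) = \<mu> * g p v)"

end

theory Submission
  imports Defs
begin

(* Off the parabola y^2 + x = 0, where g1 and g2 degenerate, the pullback equations for g1 and g2
   evaluated on (1,0), (0,1) and (1,1) force the Jacobian of phi = (X, Y) to be diagonal and give
   mu2 Y^3 = mu1 y^3. By continuity this holds on all of U, so Y = alpha y with alpha the real cube
   root of mu1/mu2, and dY/dv = alpha. The dx^2 and dy^2 coefficients of g3, combined with g1 and
   g2, then give X = mu2 x, and the dx dy coefficient of g1 at a point with x ~= 0 gives
   mu2 = alpha^2. *)

lemma blinfun_apply_pair:
  fixes L :: "(real \<times> real) \<Rightarrow>\<^sub>L (real \<times> real)"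
  shows "L (v1, v2) = (fst (L (1, 0)) * v1 + fst (L (0, 1)) * v2, snd (L (1, 0)) * v1 + snd (L (0, 1)) * v2)"
proof -
  have "(v1, v2) = v1 *\<^sub>R (1, 0) + v2 *\<^sub>R ((0, 1) :: real \<times> real)" by simp
  then have "L (v1, v2) = v1 *\<^sub>R L (1, 0) + v2 *\<^sub>R L (0, 1)"
    by (metis blinfun.add_right blinfun.scaleR_right)
  then show ?thesis by (simp add: prod_eq_iff mult.commute)
qed

lemma tendsto_shift_fst:
  fixes p :: "real \<times> real"
  shows "((\<lambda>t. p + (t, 0)) \<longlongrightarrow> p) (at (0::real))"
proof -
  have "isCont (\<lambda>t::real. p + (t, 0)) 0"
    by (intro continuous_intros)
  then show ?thesis
    by (simp add: isCont_def zero_prod_def[symmetric])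
qed

lemma eventually_shift_fst_in_open:
  fixes p :: "real \<times> real"
  assumes "open U" and "p \<in> U"
  shows "\<forall>\<^sub>F t in at (0::real). p + (t, 0) \<in> U"
  using topological_tendstoD[OF tendsto_shift_fst assms] .

lemma continuous_on_eq_off_graph:
  fixes f g :: "real \<times> real \<Rightarrow> 'a::t2_space"
  assumes "open U" and "continuous_on U f" and "continuous_on U g"
    and eq: "\<And>q. q \<in> U \<Longrightarrow> fst q \<noteq> h (snd q) \<Longrightarrow> f q = g q"
    and "p \<in> U"
  shows "f p = g p"
proof -
  have "isCont f p" "isCont g p"
    using assms continuous_on_eq_continuous_at by blast+
  then have f_lim: "((\<lambda>t. f (p + (t, 0))) \<longlongrightarrow> f p) (at 0)"
    and g_lim: "((\<lambda>t. g (p + (t, 0))) \<longlongrightarrow> g p) (at 0)"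
    using isCont_tendsto_compose tendsto_shift_fst by blast+
  have "\<forall>\<^sub>F t in at 0. f (p + (t, 0)) = g (p + (t, 0))"
    using eventually_shift_fst_in_open[OF assms(1,5)] eventually_neq_at_within[of "h (snd p) - fst p" 0 UNIV]
    by eventually_elim (auto intro: eq)
  with f_lim have "((\<lambda>t. g (p + (t, 0))) \<longlongrightarrow> f p) (at 0)"
    by (rule Lim_transform_eventually)
  with g_lim show ?thesis
    using tendsto_unique at_neq_bot by blast
qed

lemma has_derivative_unique_on_open:
  assumes "(f has_derivative F) (at p)" and "(g has_derivative G) (at p)"
    and "open U" and "p \<in> U" and "\<And>q. q \<in> U \<Longrightarrow> f q = g q"
  shows "F = G"
  using has_derivative_transform_within_open[OF assms(1,3,4,5)] assms(2) has_derivative_unique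
  by blast

lemma g1_g2_pullback_diagonal:
  fixes x y X Y a b c d \<mu>1 \<mu>2 :: real
  assumes "y \<noteq> 0" and "Y \<noteq> 0" and "y^2 + x \<noteq> 0" and "\<mu>1 \<noteq> 0"
    and g1: "\<And>v1 v2. g1 (X, Y) (a * v1 + b * v2, c * v1 + d * v2) = \<mu>1 * g1 (x, y) (v1, v2)"
    and g2: "\<And>v1 v2. g2 (X, Y) (a * v1 + b * v2, c * v1 + d * v2) = \<mu>2 * g2 (x, y) (v1, v2)"
  shows "b = 0" and "c = 0" and "\<mu>2 * Y^3 = \<mu>1 * y^3"
proof -
  define S s where "S = Y^2 + X" and "s = y^2 + x"
  have "s \<noteq> 0" using assms(3) by (simp add: s_def)
  have ac: "S * a * c = 0" and bd: "S * b * d = 0"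
    using g1[of 1 0] g1[of 0 1] by (simp_all add: g1_def S_def)
  have "S * (a + b) * (c + d) = \<mu>1 * s"
    using g1[of 1 1] by (simp add: g1_def S_def s_def)
  moreover have "S * (a + b) * (c + d) = S * a * c + S * b * d + (S * a * d + S * b * c)"
    by (simp add: algebra_simps)
  ultimately have ad: "S * a * d + S * b * c = \<mu>1 * s"
    using ac bd by linarith
  then have "S \<noteq> 0" using \<open>s \<noteq> 0\<close> assms(4) by auto
  have "-2 * S / Y^3 * a * c + S^2 / Y^4 * c^2 = 0"
    using g2[of 1 0] by (simp add: g2_def S_def)
  moreover have "a * c = 0" using ac \<open>S \<noteq> 0\<close> by simp
  ultimately have "S^2 / Y^4 * c^2 = 0" by simp
  then show "c = 0"
    using \<open>S \<noteq> 0\<close> assms(2) by simp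
  with ad have Sad: "S * a * d = \<mu>1 * s" by simp
  then show "b = 0"
    using bd \<open>s \<noteq> 0\<close> assms(4) by auto
  have "-2 * S / Y^3 * a * d + S^2 / Y^4 * d^2 = \<mu>2 * (-2 * s / y^3 + s^2 / y^4)"
    and "S^2 / Y^4 * d^2 = \<mu>2 * (s^2 / y^4)"
    using g2[of 1 1] g2[of 0 1] \<open>b = 0\<close> \<open>c = 0\<close> by (simp_all add: g2_def S_def s_def)
  then have "S * a * d / Y^3 = \<mu>2 * s / y^3"
    by argo
  then have "\<mu>1 * s / Y^3 = \<mu>2 * s / y^3"
    by (simp add: Sad)
  then show "\<mu>2 * Y^3 = \<mu>1 * y^3"
    using \<open>s \<noteq> 0\<close> assms(1,2) by (simp add: field_simps)
qed

lemma g123_pullback_fst_scaling: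
  fixes x y X Y a \<alpha> \<mu>1 \<mu>2 \<mu>3 :: real
  assumes "y \<noteq> 0" and "y^2 + x \<noteq> 0" and "3 * X \<noteq> Y^2" and "\<alpha> \<noteq> 0" and "\<mu>2 \<noteq> 0"
    and Y: "Y = \<alpha> * y"
    and g1: "\<And>v1 v2. g1 (X, Y) (a * v1, \<alpha> * v2) = \<mu>1 * g1 (x, y) (v1, v2)"
    and g2: "\<And>v1 v2. g2 (X, Y) (a * v1, \<alpha> * v2) = \<mu>2 * g2 (x, y) (v1, v2)"
    and g3: "\<And>v1 v2. g3 (X, Y) (a * v1, \<alpha> * v2) = \<mu>3 * g3 (x, y) (v1, v2)"
  shows "X = \<mu>1^2 / (\<mu>2 * \<alpha>^6) * x"
proof -
  define S s T t where "S = Y^2 + X" and "s = y^2 + x" and "T = 3 * X - Y^2" and "t = 3 * x - y^2"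
  have "s \<noteq> 0" and "T \<noteq> 0" using assms(2,3) by (simp_all add: s_def T_def)
  have Sa: "S * a * \<alpha> = \<mu>1 * s"
    using g1[of 1 1] by (simp add: g1_def S_def s_def)
  have "S^2 / Y^4 * \<alpha>^2 = \<mu>2 * (s^2 / y^4)"
    using g2[of 0 1] by (simp add: g2_def S_def s_def)
  then have "S^2 * \<alpha>^2 = (\<mu>2 * \<alpha>^2 * s^2) * \<alpha>^2"
    using assms(1,4) Y by (simp add: field_simps power_mult_distrib power2_eq_square power4_eq_xxxx)
  then have SS: "S^2 = \<mu>2 * \<alpha>^2 * s^2"
    using assms(4) by simp
  then have "S \<noteq> 0" using \<open>s \<noteq> 0\<close> assms(4,5) by auto
  define W w where "W = S^2 / T^6" and "w = s^2 / t^6"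
  have "9 * (a^2 * W) = 9 * (\<mu>3 * w)" and "12 * (X * \<alpha>^2 * W) = 12 * (x * (\<mu>3 * w))"
    using g3[of 1 0] g3[of 0 1]
    by (simp_all add: g3_def S_def s_def T_def t_def W_def w_def power2_eq_square mult_ac)
  then have "X * \<alpha>^2 * W = x * a^2 * W" by simp
  moreover have "W \<noteq> 0" using \<open>S \<noteq> 0\<close> \<open>T \<noteq> 0\<close> by (simp add: W_def)
  ultimately have Xa: "X * \<alpha>^2 = x * a^2" by simp
  have "\<mu>1^2 * s^2 = S^2 * a^2 * \<alpha>^2"
    using Sa by (metis power_mult_distrib)
  also have "\<dots> = \<mu>2 * \<alpha>^4 * a^2 * s^2"
    unfolding SS by (simp add: power4_eq_xxxx power2_eq_square mult_ac)
  finally have "\<mu>2 * \<alpha>^4 * a^2 * s^2 = \<mu>1^2 * s^2" ..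
  then have "\<mu>2 * \<alpha>^4 * a^2 = \<mu>1^2" using \<open>s \<noteq> 0\<close> by simp
  moreover have "\<alpha>^6 = \<alpha>^2 * \<alpha>^4" by (simp flip: power_add)
  ultimately have "X * (\<mu>2 * \<alpha>^6) = \<mu>1^2 * x"
    using Xa by (metis mult.assoc mult.commute)
  then show ?thesis
    using assms(4,5) by (simp add: field_simps)
qed

lemma pulls_back_to_multiple_matrix:
  assumes "pulls_back_to_multiple g \<phi> D U \<mu>" and "p \<in> U"
  shows "g (fst (\<phi> p), snd (\<phi> p))
      (fst (D p (1, 0)) * v1 + fst (D p (0, 1)) * v2, snd (D p (1, 0)) * v1 + snd (D p (0, 1)) * v2)
    = \<mu> * g (fst p, snd p) (v1, v2)"
  using assms unfolding pulls_back_to_multiple_def by (metis blinfun_apply_pair prod.collapse)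

locale homothetic_pullback =
  fixes \<phi> :: "real \<times> real \<Rightarrow> real \<times> real"
    and D :: "real \<times> real \<Rightarrow> (real \<times> real) \<Rightarrow>\<^sub>L (real \<times> real)"
    and U :: "(real \<times> real) set"
    and \<mu>1 \<mu>2 \<mu>3 :: real
  assumes open_U: "open U"
    and U_domain: "U \<subseteq> metric_domain" and image_domain: "\<phi> ` U \<subseteq> metric_domain"
    and derivative: "\<And>p. p \<in> U \<Longrightarrow> (\<phi> has_derivative blinfun_apply (D p)) (at p)"
    and \<mu>1_nonzero: "\<mu>1 \<noteq> 0" and \<mu>2_nonzero: "\<mu>2 \<noteq> 0"
    and pullback_g1: "pulls_back_to_multiple g1 \<phi> D U \<mu>1"
    and pullback_g2: "pulls_back_to_multiple g2 \<phi> D U \<mu>2"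
    and pullback_g3: "pulls_back_to_multiple g3 \<phi> D U \<mu>3"
begin

lemma metric_domain_coords:
  assumes "p \<in> U"
  shows "snd p \<noteq> 0" and "snd (\<phi> p) \<noteq> 0" and "3 * fst (\<phi> p) \<noteq> snd (\<phi> p)^2"
  using assms U_domain image_domain unfolding metric_domain_def by (auto simp: case_prod_beta)

lemma continuous_on_phi: "continuous_on U \<phi>"
  using derivative has_derivative_continuous continuous_at_imp_continuous_on by blast

lemma jacobian_diagonal_off_parabola:
  assumes "p \<in> U" and "snd p^2 + fst p \<noteq> 0"
  shows "fst (D p (0, 1)) = 0" and "snd (D p (1, 0)) = 0"
    and "\<mu>2 * snd (\<phi> p)^3 = \<mu>1 * snd p^3"
  using g1_g2_pullback_diagonal[OF metric_domain_coords(1,2)[OF assms(1)] assms(2) \<mu>1_nonzero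
      pulls_back_to_multiple_matrix[OF pullback_g1 assms(1)]
      pulls_back_to_multiple_matrix[OF pullback_g2 assms(1)]]
  by auto

definition \<alpha> :: real where "\<alpha> = root 3 (\<mu>1 / \<mu>2)"

lemma \<alpha>_nonzero: "\<alpha> \<noteq> 0"
  using \<mu>1_nonzero \<mu>2_nonzero by (simp add: \<alpha>_def)

lemma \<alpha>_cube: "\<alpha>^3 = \<mu>1 / \<mu>2"
  by (simp add: \<alpha>_def odd_real_root_pow)

lemma snd_phi:
  assumes "p \<in> U"
  shows "snd (\<phi> p) = \<alpha> * snd p"
proof -
  have "\<mu>2 * snd (\<phi> p)^3 = \<mu>1 * snd p^3"
    by (rule continuous_on_eq_off_graph[OF open_U _ _ _ assms, where h = "\<lambda>y. - (y^2)"])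
      (auto intro!: continuous_intros continuous_on_phi jacobian_diagonal_off_parabola)
  then have cube: "snd (\<phi> p)^3 = \<mu>1 / \<mu>2 * snd p^3"
    using \<mu>2_nonzero by (simp add: field_simps)
  have "snd (\<phi> p) = root 3 (snd (\<phi> p)^3)"
    by (simp add: odd_real_root_power_cancel)
  also have "\<dots> = \<alpha> * snd p"
    unfolding cube \<alpha>_def real_root_mult by (simp add: odd_real_root_power_cancel)
  finally show ?thesis .
qed

lemma snd_D:
  assumes "p \<in> U"
  shows "snd (D p h) = \<alpha> * snd h"
proof -
  have "(\<lambda>h. snd (D p h)) = (\<lambda>h. \<alpha> * snd h)"
    by (rule has_derivative_unique_on_open[OF has_derivative_snd[OF derivative[OF assms]] _ open_U assms])
      (auto intro!: derivative_eq_intros simp: snd_phi)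
  then show ?thesis by metis
qed

lemma fst_phi:
  assumes "p \<in> U"
  shows "fst (\<phi> p) = \<mu>2 * fst p"
proof (rule continuous_on_eq_off_graph[OF open_U _ _ _ assms, where h = "\<lambda>y. - (y^2)"])
  fix q assume q: "q \<in> U" and "fst q \<noteq> - (snd q^2)"
  then have off: "snd q^2 + fst q \<noteq> 0" by simp
  have "D q (v1, v2) = (fst (D q (1, 0)) * v1, \<alpha> * v2)" for v1 v2
    using blinfun_apply_pair[of "D q" v1 v2] jacobian_diagonal_off_parabola[OF q off] snd_D[OF q]
    by simp
  then have pullback: "g (\<phi> q) (fst (D q (1, 0)) * v1, \<alpha> * v2) = \<mu> * g q (v1, v2)"
    if "pulls_back_to_multiple g \<phi> D U \<mu>" for g \<mu> v1 v2
    using that q unfolding pulls_back_to_multiple_def by metis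
  have "fst (\<phi> q) = \<mu>1^2 / (\<mu>2 * \<alpha>^6) * fst q"
    by (rule g123_pullback_fst_scaling[OF metric_domain_coords(1)[OF q] off metric_domain_coords(3)[OF q] \<alpha>_nonzero \<mu>2_nonzero snd_phi[OF q]])
      (use pullback[OF pullback_g1] pullback[OF pullback_g2] pullback[OF pullback_g3] in simp_all)
  moreover have "\<alpha>^6 = (\<mu>1 / \<mu>2)^2"
    by (simp flip: \<alpha>_cube power_mult)
  ultimately show "fst (\<phi> q) = \<mu>2 * fst q"
    using \<mu>1_nonzero \<mu>2_nonzero by (simp add: power2_eq_square)
qed (auto intro!: continuous_intros continuous_on_phi)

lemma phi_eq:
  assumes "p \<in> U"
  shows "\<phi> p = (\<mu>2 * fst p, \<alpha> * snd p)"
  using fst_phi[OF assms] snd_phi[OF assms] by (simp add: prod_eq_iff)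

lemma D_eq:
  assumes "p \<in> U"
  shows "D p h = (\<mu>2 * fst h, \<alpha> * snd h)"
proof -
  have "blinfun_apply (D p) = (\<lambda>h. (\<mu>2 * fst h, \<alpha> * snd h))"
    by (rule has_derivative_unique_on_open[OF derivative[OF assms] _ open_U assms])
      (auto intro!: derivative_eq_intros simp: phi_eq)
  then show ?thesis by simp
qed

lemma \<mu>2_eq_\<alpha>_squared:
  assumes "U \<noteq> {}"
  shows "\<mu>2 = \<alpha>^2"
proof -
  obtain p where p: "p \<in> U" using assms by blast
  have "\<forall>\<^sub>F t in at 0. p + (t, 0) \<in> U \<and> t \<noteq> - fst p"
    using eventually_shift_fst_in_open[OF open_U p] eventually_neq_at_within
    by (rule eventually_conj)
  then obtain t where q: "p + (t, 0) \<in> U" and "t \<noteq> - fst p"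
    using eventually_happens'[OF at_neq_bot] by blast
  have "g1 (\<phi> (p + (t, 0))) (D (p + (t, 0)) (1, 1)) = \<mu>1 * g1 (p + (t, 0)) (1, 1)"
    using pullback_g1 q by (simp add: pulls_back_to_multiple_def)
  then have "((\<alpha> * snd p)^2 + \<mu>2 * (fst p + t)) * \<mu>2 * \<alpha> = \<alpha>^3 * \<mu>2 * (snd p^2 + (fst p + t))"
    using \<alpha>_cube \<mu>2_nonzero by (simp add: phi_eq[OF q] D_eq[OF q] g1_def case_prod_beta)
  then have "\<mu>2 * \<alpha> * (fst p + t) * (\<mu>2 - \<alpha>^2) = 0"
    by (simp add: algebra_simps power2_eq_square power3_eq_cube)
  then show ?thesis
    using \<open>t \<noteq> - fst p\<close> \<mu>2_nonzero \<alpha>_nonzero by auto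
qed

end

theorem lemma6p1:
  fixes \<phi> :: "real \<times> real \<Rightarrow> real \<times> real"
    and D :: "real \<times> real \<Rightarrow> (real \<times> real) \<Rightarrow>\<^sub>L (real \<times> real)"
    and U :: "(real \<times> real) set"
    and \<mu>1 \<mu>2 \<mu>3 :: real
  assumes "open U" and "connected U" and "U \<noteq> {}"
    and "U \<subseteq> metric_domain" and "\<phi> ` U \<subseteq> metric_domain"
    and "\<And>p. p \<in> U \<Longrightarrow> (\<phi> has_derivative blinfun_apply (D p)) (at p)"
    and "continuous_on U D"
    and "\<And>p. p \<in> U \<Longrightarrow> bij (blinfun_apply (D p))"
    and "\<mu>1 \<noteq> 0" and "\<mu>2 \<noteq> 0" and "\<mu>3 \<noteq> 0"
    and "pulls_back_to_multiple g1 \<phi> D U \<mu>1"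
    and "pulls_back_to_multiple g2 \<phi> D U \<mu>2"
    and "pulls_back_to_multiple g3 \<phi> D U \<mu>3"
  shows "\<exists>k::real. k \<noteq> 0 \<and> (\<forall>u v. (u, v) \<in> U \<longrightarrow> \<phi> (u, v) = (k^2 * u, k * v))"
proof -
  interpret homothetic_pullback \<phi> D U \<mu>1 \<mu>2 \<mu>3
    by (rule homothetic_pullback.intro) (fact assms)+
  show ?thesis
    using phi_eq \<mu>2_eq_\<alpha>_squared[OF \<open>U \<noteq> {}\<close>] \<alpha>_nonzero by (intro exI[of _ \<alpha>]) auto
qed

end
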